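(* Let $p,q\ge1$ be coprime, $n=p+q\ge 2$, and let $\mathsf{T}_c$ be the lower Christoffel word determined by $p,q$, whose suffix array is arithmetically progressed with ratio $k$. Let $\mathbf{M}$ be the $n\times n$ matrix with $\mathbf{M}[i,j]=\mathsf{T}_c[(\mathsf{SA}_{\mathsf{T}_c}[i]+j-1)\bmod n]$. Then for every $i\in[1..n-1]$, rows $i$ and $i+1$ of $\mathbf{M}$ differ in exactly two positions, namely in columns $i(n-k)\bmod n$ and $(i(n-k)+1)\bmod n$.
   Context: Alphabet $\{\mathtt{a}<\mathtt{b}\}$; lexicographic order with a proper prefix smaller than the longer string; suffix array $\mathsf{SA}_{\mathsf{T}}$: permutation of $[1..n]$ such that $\mathsf{T}[\mathsf{SA}_{\mathsf{T}}[i]..n]$ is the $i$-th smallest suffix. $x\bmod n$ denotes the representative of $x$ modulo $n$ in $[1..n]$; $x\operatorname{mod}_0 n$ the representative in $[0..n-1]$. An arithmetically progressed permutation of length $n$ with ratio $k\in[1..n-1]$ is a permutation $P$ of $[1..n]$ with $P[i+1]=P[i]+k\bmod n$. Lower Christoffel word determined by coprime $p,q\ge1$: the string $\mathsf{T}_c$ of length $n=p+q$ with $\mathsf{T}_c[i]=\mathtt{a}$ if $(i-1)q\operatorname{mod}_0 n< iq\operatorname{mod}_0 n$ and $\mathtt{b}$ otherwise, $i\in[1..n]$. *)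

theory Defs
  imports Main
begin

datatype letter = La | Lb

instantiation letter :: linorder
begin
definition less_eq_letter :: "letter \<Rightarrow> letter \<Rightarrow> bool" where
  "less_eq_letter x y \<longleftrightarrow> (x = La \<or> y = Lb)"
definition less_letter :: "letter \<Rightarrow> letter \<Rightarrow> bool" where
  "less_letter x y \<longleftrightarrow> (x = La \<and> y = Lb)"
instance by standard (auto simp: less_eq_letter_def less_letter_def; metis letter.exhaust)+
end

definition nth1 :: "'a list \<Rightarrow> nat \<Rightarrow> 'a" where
  "nth1 xs i = xs ! (i - 1)"

definition mod1 :: "nat \<Rightarrow> nat \<Rightarrow> nat" where
  "mod1 x n = (if x mod n = 0 then n else x mod n)"

definition suffix1 :: "'a list \<Rightarrow> nat \<Rightarrow> 'a list" where
  "suffix1 T i = drop (i - 1) T"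

text \<open>Lexicographic order, a proper prefix being smaller: library lexordp.\<close>
definition is_suffix_array :: "letter list \<Rightarrow> nat list \<Rightarrow> bool" where
  "is_suffix_array T SA \<longleftrightarrow>
     length SA = length T \<and> set SA = {1..length T} \<and>
     (\<forall>i\<in>{1..<length T}. ord_class.lexordp (suffix1 T (nth1 SA i)) (suffix1 T (nth1 SA (i + 1))))"

definition arith_prog_perm :: "nat list \<Rightarrow> nat \<Rightarrow> nat \<Rightarrow> bool" where
  "arith_prog_perm P n k \<longleftrightarrow>
     length P = n \<and> set P = {1..n} \<and> k \<in> {1..n-1} \<and>
     (\<forall>i\<in>{1..<n}. nth1 P (i + 1) = mod1 (nth1 P i + k) n)"

definition christoffel :: "nat \<Rightarrow> nat \<Rightarrow> letter list" where
  "christoffel p q = map (\<lambda>i. if ((i - 1) * q) mod (p + q) < (i * q) mod (p + q) then La else Lb)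
                        [1..<p + q + 1]"

definition conj_matrix :: "letter list \<Rightarrow> nat list \<Rightarrow> nat \<Rightarrow> nat \<Rightarrow> letter" where
  "conj_matrix T SA i j = nth1 T (mod1 (nth1 SA i + j - 1) (length T))"

end

theory Submission
  imports Defs "HOL-Number_Theory.Cong"
begin

text \<open>
  With \<open>n = p + q\<close>, letter \<open>i\<close> (counted from 0) of the Christoffel word is \<open>a\<close> iff
  \<open>i q mod n < p\<close>, so the suffix starting at \<open>s\<close> is the threshold-\<open>p\<close> coding of the orbit of
  \<open>(s - 1) q mod n\<close> under \<open>z \<mapsto> z + q (mod n)\<close>. Two orbits keep their distance while
  their codings agree, so the lower one crosses the threshold first: suffixes are ordered like
  their starting orbit points, whence \<open>SA[i]\<close> has orbit point \<open>i - 1\<close>. This forces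
  \<open>k q \<equiv> 1 (mod n)\<close> and makes row \<open>i\<close> of the matrix the coding of the orbit of \<open>i - 1\<close>.
  Rows \<open>i\<close> and \<open>i + 1\<close> thus differ exactly where \<open>i - 1 + (j - 1) q\<close> is \<open>p - 1\<close> or
  \<open>n - 1\<close> modulo \<open>n\<close>, and multiplying by \<open>k\<close> turns these conditions into
  \<open>j \<equiv> i (n - k)\<close> and \<open>j \<equiv> i (n - k) + 1\<close>.
\<close>

lemma lexordp_first_difference:
  fixes xs ys :: "'a::linorder list"
  assumes "i < length xs" "i < length ys" "\<forall>j<i. xs ! j = ys ! j" "xs ! i < ys ! i"
  shows "ord_class.lexordp xs ys"
proof -
  have prefix: "take i xs = take i ys" using assms by (intro nth_equalityI) auto
  have "xs = take i xs @ xs ! i # drop (Suc i) xs" using assms(1) by (simp add: id_take_nth_drop)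
  moreover have "ys = take i xs @ ys ! i # drop (Suc i) ys" using assms(2) prefix by (metis id_take_nth_drop)
  ultimately show ?thesis using assms(4) by (metis lexordp_append_left_rightI)
qed

lemma lexordp_proper_prefix:
  fixes xs ys :: "'a::linorder list"
  assumes "length xs < length ys" "\<forall>j<length xs. xs ! j = ys ! j"
  shows "ord_class.lexordp xs ys"
proof -
  have "xs = take (length xs) ys" using assms by (intro nth_equalityI) auto
  then have "ys = xs @ drop (length xs) ys" by (metis append_take_drop_id)
  moreover have "drop (length xs) ys \<noteq> []" using assms(1) by simp
  ultimately show ?thesis by (metis lexordp_append_rightI)
qed

lemma nth1_in_set: "1 \<le> i \<Longrightarrow> i \<le> length xs \<Longrightarrow> nth1 xs i \<in> set xs"
  by (simp add: nth1_def)

lemma mod1_in_range: "0 < n \<Longrightarrow> mod1 z n \<in> {1..n}"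
  by (auto simp: mod1_def Suc_leI)

lemma mod1_minus_one: "0 < n \<Longrightarrow> 1 \<le> z \<Longrightarrow> mod1 z n - 1 = (z - 1) mod n"
  by (cases z) (auto simp: mod1_def mod_Suc)

lemma mod1_eq_iff_cong:
  assumes "1 \<le> j" "j \<le> n"
  shows "mod1 z n = j \<longleftrightarrow> [int z = int j] (mod int n)"
proof -
  have "mod1 z n = j \<longleftrightarrow> z mod n = j mod n"
    using assms by (cases "j = n") (auto simp: mod1_def mod_less_divisor less_imp_neq)
  then show ?thesis by (simp add: cong_def flip: of_nat_mod)
qed

lemma mod1_mult_complement_eq_iff:
  fixes i k n c j :: nat
  assumes "k \<le> n" "1 \<le> j" "j \<le> n"
  shows "mod1 (i * (n - k) + c) n = j \<longleftrightarrow> [int i * int k + int j - int c = 0] (mod int n)"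
proof -
  have "int (i * (n - k)) = int i * int n - int i * int k"
    using assms(1) by (simp add: of_nat_diff right_diff_distrib)
  then have "int (i * (n - k) + c) - int j = int i * int n + - (int i * int k + int j - int c)"
    by simp
  then show ?thesis unfolding mod1_eq_iff_cong[OF assms(2,3)] cong_iff_dvd_diff cong_0_iff
    by (simp only: dvd_add_times_triv_left_iff dvd_minus_iff diff_0_right)
qed

lemma mod_eq_diff_iff_cong:
  fixes A c n :: nat
  assumes "1 \<le> c" "c \<le> n"
  shows "A mod n = n - c \<longleftrightarrow> [int A + int c = 0] (mod int n)"
proof -
  define x where "x = A mod n"
  have x: "x < n" using assms by (simp add: x_def)
  have "[int A + int c = 0] (mod int n) \<longleftrightarrow> (x + c) mod n = 0"
    by (simp add: cong_0_iff x_def flip: of_nat_add) (simp add: dvd_eq_mod_eq_0 mod_add_left_eq)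
  also have "\<dots> \<longleftrightarrow> x + c = n"
  proof (cases "x + c < n")
    case False
    then have "(x + c) mod n = x + c - n" using x assms by (simp add: le_mod_geq)
    then show ?thesis using False by auto
  qed (use assms in auto)
  finally show ?thesis using assms by (auto simp: x_def)
qed

lemma cong_zero_mult_inverse:
  fixes n k q a b :: int
  assumes "[k * q = 1] (mod n)"
  shows "[a + b * q = 0] (mod n) \<longleftrightarrow> [a * k + b = 0] (mod n)"
proof -
  have inv: "n dvd k * q - 1" using assms by (simp add: cong_iff_dvd_diff)
  have "a * k + b = k * (a + b * q) - b * (k * q - 1)" "a + b * q = q * (a * k + b) - a * (k * q - 1)"
    by (simp_all add: algebra_simps)
  then show ?thesis unfolding cong_0_iff using inv by (metis dvd_diff dvd_mult)
qed

definition threshold_letter :: "nat \<Rightarrow> nat \<Rightarrow> letter" where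
  "threshold_letter p z = (if z < p then La else Lb)"

lemma add_mod_threshold:
  fixes p q z :: nat
  assumes "z < p + q"
  shows "(z + q) mod (p + q) = (if z < p then z + q else z - p)"
proof (cases "z < p")
  case False
  then have "z + q = (z - p) + (p + q)" "z - p < p + q" using assms by simp_all
  then show ?thesis using False by (metis mod_add_self2 mod_less)
qed simp

lemma threshold_letter_succ_differ_iff:
  assumes "1 \<le> p" "1 \<le> q" "x < p + q"
  shows "threshold_letter p x \<noteq> threshold_letter p ((x + 1) mod (p + q)) \<longleftrightarrow>
           x = p - 1 \<or> x = p + q - 1"
proof (cases "x + 1 < p + q")
  case False
  then have "x = p + q - 1" "x + 1 = p + q" using assms(3) by auto
  then show ?thesis using assms by (auto simp: threshold_letter_def)
qed (use assms in \<open>auto simp: threshold_letter_def\<close>)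

lemma christoffel_length: "length (christoffel p q) = p + q"
  by (simp add: christoffel_def del: upt_Suc)

lemma christoffel_nth:
  assumes "1 \<le> p" "1 \<le> q" "i < p + q"
  shows "christoffel p q ! i = threshold_letter p ((i * q) mod (p + q))"
proof -
  let ?z = "(i * q) mod (p + q)"
  have "((i + 1) * q) mod (p + q) = (?z + q) mod (p + q)"
    by (metis add.commute mod_add_left_eq mult_Suc Suc_eq_plus1)
  then have "?z < ((i + 1) * q) mod (p + q) \<longleftrightarrow> ?z < p"
    using add_mod_threshold[of ?z p q] assms by auto
  then show ?thesis using assms by (simp add: christoffel_def threshold_letter_def del: upt_Suc)
qed

lemma suffix1_christoffel_nth:
  assumes "1 \<le> p" "1 \<le> q" "1 \<le> s" "s \<le> p + q" "m < p + q - (s - 1)"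
  shows "suffix1 (christoffel p q) s ! m
           = threshold_letter p ((((s - 1) * q) mod (p + q) + m * q) mod (p + q))"
proof -
  have "suffix1 (christoffel p q) s ! m = christoffel p q ! (s - 1 + m)"
    using assms by (simp add: suffix1_def christoffel_length)
  also have "\<dots> = threshold_letter p (((s - 1 + m) * q) mod (p + q))"
    using assms by (intro christoffel_nth) auto
  finally show ?thesis by (simp add: add_mult_distrib mod_add_left_eq)
qed

lemma orbit_gap_preserved:
  fixes x y p q m :: nat
  assumes "x < y" "y < p + q"
    and "\<forall>j<m. (x + j * q) mod (p + q) < p \<longleftrightarrow> (y + j * q) mod (p + q) < p"
  shows "(y + m * q) mod (p + q) = (x + m * q) mod (p + q) + (y - x)"
  using assms(3)
proof (induction m)
  case (Suc m)
  let ?X = "(x + m * q) mod (p + q)" and ?Y = "(y + m * q) mod (p + q)"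
  have gap: "?Y = ?X + (y - x)" and same_side: "?X < p \<longleftrightarrow> ?Y < p" using Suc by auto
  have "(x + Suc m * q) mod (p + q) = (?X + q) mod (p + q)"
    "(y + Suc m * q) mod (p + q) = (?Y + q) mod (p + q)"
    by (simp_all add: mod_add_left_eq mod_add_right_eq algebra_simps)
  moreover have "0 < p + q" using assms(2) by linarith
  then have "?X < p + q" "?Y < p + q" by simp_all
  ultimately show ?case using add_mod_threshold gap same_side by auto
qed (use assms in simp)

lemma orbit_point_last:
  fixes p q :: nat
  assumes "1 \<le> q"
  shows "((p + q - 1) * q) mod (p + q) = p"
proof -
  obtain r where "q = Suc r" using assms by (cases q) auto
  then have "(p + q - 1) * q = p + r * (p + q)" by (simp add: algebra_simps)
  then have "((p + q - 1) * q) mod (p + q) = p mod (p + q)" by simp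
  then show ?thesis using \<open>q = Suc r\<close> by simp
qed

lemma christoffel_suffix_lexordp:
  assumes p: "1 \<le> p" and q: "1 \<le> q" and a: "1 \<le> a" "a \<le> p + q" and b: "1 \<le> b" "b \<le> p + q"
    and less: "((a - 1) * q) mod (p + q) < ((b - 1) * q) mod (p + q)"
  shows "ord_class.lexordp (suffix1 (christoffel p q) a) (suffix1 (christoffel p q) b)"
proof -
  define n where "n = p + q"
  define x where "x = ((a - 1) * q) mod n"
  define y where "y = ((b - 1) * q) mod n"
  define split where "split m \<longleftrightarrow> ((x + m * q) mod n < p) \<noteq> ((y + m * q) mod n < p)" for m
  have xy: "x < y" "y < n" using less p by (simp_all add: x_def y_def n_def)
  have gap: "(y + m * q) mod n = (x + m * q) mod n + (y - x)" if "\<forall>j<m. \<not> split j" for m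
    using orbit_gap_preserved[of x y p q m] xy that by (simp add: split_def n_def)
  have "(y + (n - b) * q) mod n = ((b - 1) * q + (n - b) * q) mod n"
    by (simp add: y_def mod_add_left_eq)
  also have "(b - 1) * q + (n - b) * q = (n - 1) * q" using b by (simp add: n_def flip: add_mult_distrib)
  finally have y_last: "(y + (n - b) * q) mod n = p" using orbit_point_last[OF q] by (simp add: n_def)
  \<comment> \<open>The orbit of \<open>y\<close> reaches \<open>p\<close> at the last letter of suffix \<open>b\<close>, where the
      orbit of \<open>x\<close> is still below \<open>p\<close> unless the two orbits have split earlier.\<close>
  have "\<exists>m\<le>n - b. split m"
  proof (rule ccontr)
    assume "\<not> ?thesis"
    then show False using gap[of "n - b"] y_last xy by (auto simp: split_def)
  qed
  then obtain m where m: "split m" "m \<le> n - b" "\<forall>j<m. \<not> split j"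
    by (metis (mono_tags) LeastI Least_le not_less_Least order_trans)
  have m_sides: "(x + m * q) mod n < p" "\<not> (y + m * q) mod n < p"
    using gap[OF m(3)] m(1) xy by (auto simp: split_def)
  have sa: "suffix1 (christoffel p q) a ! j = threshold_letter p ((x + j * q) mod n)"
    if "j < n - (a - 1)" for j
    using suffix1_christoffel_nth[OF p q a, of j] that by (simp add: x_def n_def)
  have sb: "suffix1 (christoffel p q) b ! j = threshold_letter p ((y + j * q) mod n)"
    if "j < n - (b - 1)" for j
    using suffix1_christoffel_nth[OF p q b, of j] that by (simp add: y_def n_def)
  have agree: "threshold_letter p ((x + j * q) mod n) = threshold_letter p ((y + j * q) mod n)"
    if "j < m" for j
    using m(3) that by (auto simp: split_def threshold_letter_def)
  have lengths: "length (suffix1 (christoffel p q) s) = n - (s - 1)" for s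
    by (simp add: suffix1_def christoffel_length n_def)
  show ?thesis
  proof (cases "m < n - (a - 1)")
    case True
    then show ?thesis
      using m(2) b sa sb agree m_sides
      by (intro lexordp_first_difference[of m])
        (auto simp: lengths n_def threshold_letter_def less_letter_def)
  next
    case False
    then show ?thesis
      using m(2) b sa sb agree by (intro lexordp_proper_prefix) (auto simp: lengths n_def)
  qed
qed

lemma orbit_point_inj:
  fixes p q a b :: nat
  assumes "coprime p q" "1 \<le> a" "a \<le> p + q" "1 \<le> b" "b \<le> p + q"
    and "((a - 1) * q) mod (p + q) = ((b - 1) * q) mod (p + q)"
  shows "a = b"
proof -
  have "coprime q (p + q)"
    using assms(1) by (metis add.commute coprime_commute coprime_iff_gcd_eq_1 gcd_add2)
  moreover have "[(a - 1) * q = (b - 1) * q] (mod (p + q))" using assms by (simp add: cong_def)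
  ultimately have "[a - 1 = b - 1] (mod (p + q))" by (simp add: cong_mult_rcancel_nat)
  then have "a - 1 = b - 1" using assms by (intro cong_less_modulus_unique_nat) auto
  then show ?thesis using assms by simp
qed

lemma increasing_below_bound_eq:
  fixes f :: "nat \<Rightarrow> nat"
  assumes inc: "\<And>i. 1 \<le> i \<Longrightarrow> i < n \<Longrightarrow> f i < f (Suc i)"
    and bound: "\<And>i. 1 \<le> i \<Longrightarrow> i \<le> n \<Longrightarrow> f i < n"
    and i: "1 \<le> i" "i \<le> n"
  shows "f i = i - 1"
proof -
  have growth: "f i + (i' - i) \<le> f i'" if "1 \<le> i" "i \<le> i'" "i' \<le> n" for i i'
    using that(2,3)
  proof (induction i' rule: dec_induct)
    case (step m)
    then show ?case using inc[of m] that(1) by simp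
  qed simp
  have "f 1 + (i - 1) \<le> f i" "f i + (n - i) \<le> f n" using growth i by auto
  then show ?thesis using bound[of n] i by simp
qed

lemma christoffel_suffix_array_orbit:
  assumes p: "1 \<le> p" and q: "1 \<le> q" and cop: "coprime p q"
    and SA: "is_suffix_array (christoffel p q) SA" and i: "1 \<le> i" "i \<le> p + q"
  shows "((nth1 SA i - 1) * q) mod (p + q) = i - 1"
proof -
  define n where "n = p + q"
  define v where "v i = ((nth1 SA i - 1) * q) mod n" for i
  have range: "nth1 SA i \<in> {1..n}" if "1 \<le> i" "i \<le> n" for i
    using SA nth1_in_set[of i SA] that
    by (auto simp: is_suffix_array_def christoffel_length n_def)
  have sorted: "ord_class.lexordp (suffix1 (christoffel p q) (nth1 SA i))
                  (suffix1 (christoffel p q) (nth1 SA (Suc i)))" if "1 \<le> i" "i < n" for i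
    using SA that by (simp add: is_suffix_array_def christoffel_length n_def)
  have "v i < v (Suc i)" if "1 \<le> i" "i < n" for i
  proof (rule ccontr)
    assume "\<not> v i < v (Suc i)"
    then consider "v (Suc i) < v i" | "v (Suc i) = v i" by linarith
    then show False
    proof cases
      case 1
      then have "ord_class.lexordp (suffix1 (christoffel p q) (nth1 SA (Suc i)))
                   (suffix1 (christoffel p q) (nth1 SA i))"
        using christoffel_suffix_lexordp[OF p q, of "nth1 SA (Suc i)" "nth1 SA i"]
          range[of i] range[of "Suc i"] that by (auto simp: v_def n_def)
      then show False using sorted[OF that] lexordp_antisym by blast
    next
      case 2
      then have "nth1 SA (Suc i) = nth1 SA i"
        using orbit_point_inj[OF cop, of "nth1 SA (Suc i)" "nth1 SA i"]
          range[of i] range[of "Suc i"] that by (auto simp: v_def n_def)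
      then show False using sorted[OF that] lexordp_irreflexive' by metis
    qed
  qed
  moreover have "v i < n" for i using p by (simp add: v_def n_def)
  ultimately show ?thesis
    using increasing_below_bound_eq[of n v i] i by (simp add: v_def n_def)
qed

lemma christoffel_suffix_array_ratio:
  assumes p: "1 \<le> p" and q: "1 \<le> q" and cop: "coprime p q" and n: "2 \<le> p + q"
    and SA: "is_suffix_array (christoffel p q) SA" and AP: "arith_prog_perm SA (p + q) k"
  shows "[k * q = 1] (mod (p + q))"
proof -
  define n where "n = p + q"
  define s where "s = nth1 SA 1"
  have s: "1 \<le> s" using SA nth1_in_set[of 1 SA] n
    by (auto simp: s_def is_suffix_array_def christoffel_length)
  have "nth1 SA 2 = mod1 (s + k) n"
    using AP n by (auto simp: arith_prog_perm_def s_def n_def numeral_2_eq_2)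
  then have "((mod1 (s + k) n - 1) * q) mod n = 1"
    using christoffel_suffix_array_orbit[OF p q cop SA, of 2] n by (simp add: n_def)
  moreover have "mod1 (s + k) n - 1 = (s + k - 1) mod n"
    using mod1_minus_one[of n "s + k"] s p by (simp add: n_def)
  ultimately have "((s + k - 1) * q) mod n = 1" by (simp add: mod_mult_left_eq)
  moreover have "(s + k - 1) * q = (s - 1) * q + k * q" using s by (simp add: algebra_simps)
  moreover have "((s - 1) * q) mod n = 0"
    using christoffel_suffix_array_orbit[OF p q cop SA, of 1] n by (simp add: s_def n_def)
  ultimately have "(k * q) mod n = 1" by (metis add_0 mod_add_left_eq)
  then show ?thesis using n by (simp add: cong_def n_def)
qed

lemma conj_matrix_christoffel:
  assumes p: "1 \<le> p" and q: "1 \<le> q" and cop: "coprime p q"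
    and SA: "is_suffix_array (christoffel p q) SA"
    and i: "1 \<le> i" "i \<le> p + q" and j: "1 \<le> j" "j \<le> p + q"
  shows "conj_matrix (christoffel p q) SA i j
           = threshold_letter p ((i - 1 + (j - 1) * q) mod (p + q))"
proof -
  define n where "n = p + q"
  define s where "s = nth1 SA i"
  have s: "1 \<le> s" using SA nth1_in_set[of i SA] i
    by (auto simp: s_def is_suffix_array_def christoffel_length)
  have n: "0 < n" using p by (simp add: n_def)
  have "conj_matrix (christoffel p q) SA i j = christoffel p q ! ((s + j - 1 - 1) mod n)"
    using mod1_minus_one[OF n, of "s + j - 1"] s j
    by (simp add: conj_matrix_def nth1_def christoffel_length s_def n_def)
  also have "\<dots> = threshold_letter p ((((s + j - 1 - 1) mod n) * q) mod n)"
    using christoffel_nth[OF p q] n by (simp add: n_def)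
  also have "(((s + j - 1 - 1) mod n) * q) mod n = ((s - 1 + (j - 1)) * q) mod n"
    using s j by (simp add: mod_mult_left_eq)
  also have "\<dots> = ((s - 1) * q + (j - 1) * q) mod n"
    by (simp only: add_mult_distrib)
  also have "\<dots> = (i - 1 + (j - 1) * q) mod n"
    using christoffel_suffix_array_orbit[OF p q cop SA i]
    by (metis s_def n_def mod_add_left_eq)
  finally show ?thesis by (simp add: n_def)
qed

lemma christoffel_rows_differ_iff:
  fixes p q n k i j :: nat
  assumes p: "1 \<le> p" and q: "1 \<le> q" and n: "n = p + q"
    and inv: "[k * q = 1] (mod n)" and k: "k \<le> n" and i: "1 \<le> i" and j: "1 \<le> j" "j \<le> n"
  shows "threshold_letter p ((i - 1 + (j - 1) * q) mod n)
           \<noteq> threshold_letter p ((i + (j - 1) * q) mod n)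
         \<longleftrightarrow> j = mod1 (i * (n - k)) n \<or> j = mod1 (i * (n - k) + 1) n"
proof -
  define A where "A = i - 1 + (j - 1) * q"
  have inv_int: "[int k * int q = 1] (mod int n)" using inv by (simp flip: cong_int_iff)
  have succ: "(i + (j - 1) * q) mod n = (A mod n + 1) mod n"
    using i by (simp add: A_def mod_Suc_eq)
  have top: "A mod n = n - 1 \<longleftrightarrow> j = mod1 (i * (n - k) + 1) n"
  proof -
    have "A + 1 = i + (j - 1) * q" using i by (simp add: A_def)
    then have "int A + int 1 = int i + int (j - 1) * int q" by (metis of_nat_add of_nat_mult)
    then have "int A + int 1 = int i + (int j - 1) * int q" using j by (simp add: of_nat_diff)
    then have "A mod n = n - 1 \<longleftrightarrow> [int i + (int j - 1) * int q = 0] (mod int n)"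
      using mod_eq_diff_iff_cong[of 1 n A] n p by simp
    also have "\<dots> \<longleftrightarrow> [int i * int k + (int j - 1) = 0] (mod int n)"
      by (rule cong_zero_mult_inverse[OF inv_int])
    also have "\<dots> \<longleftrightarrow> j = mod1 (i * (n - k) + 1) n"
      using mod1_mult_complement_eq_iff[OF k j, of i 1] by (simp add: add_diff_eq eq_commute[of j])
    finally show ?thesis .
  qed
  have below_p: "A mod n = p - 1 \<longleftrightarrow> j = mod1 (i * (n - k)) n"
  proof -
    have "A + (q + 1) = i + j * q" using i j by (cases j) (auto simp: A_def)
    then have "int A + int (q + 1) = int i + int j * int q" by (metis of_nat_add of_nat_mult)
    moreover have "p - 1 = n - (q + 1)" using n p by simp
    ultimately have "A mod n = p - 1 \<longleftrightarrow> [int i + int j * int q = 0] (mod int n)"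
      using mod_eq_diff_iff_cong[of "q + 1" n A] n p by simp
    also have "\<dots> \<longleftrightarrow> [int i * int k + int j = 0] (mod int n)"
      by (rule cong_zero_mult_inverse[OF inv_int])
    also have "\<dots> \<longleftrightarrow> j = mod1 (i * (n - k)) n"
      using mod1_mult_complement_eq_iff[OF k j, of i 0] by (simp add: eq_commute[of j])
    finally show ?thesis .
  qed
  have "threshold_letter p (A mod n) \<noteq> threshold_letter p ((A mod n + 1) mod n)
          \<longleftrightarrow> A mod n = p - 1 \<or> A mod n = n - 1"
    using threshold_letter_succ_differ_iff[OF p q, of "A mod n"] n p by simp
  then show ?thesis unfolding succ A_def[symmetric] top below_p by blast
qed

theorem mainTheorem13:
  fixes p q n k :: nat and SA :: "nat list"
  assumes "p \<ge> 1" and "q \<ge> 1" and "coprime p q"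
    and "n = p + q" and "n \<ge> 2"
    and "is_suffix_array (christoffel p q) SA"
    and "arith_prog_perm SA n k"
  shows "\<forall>i\<in>{1..n-1}.
           {j \<in> {1..n}. conj_matrix (christoffel p q) SA i j \<noteq> conj_matrix (christoffel p q) SA (i + 1) j}
             = {mod1 (i * (n - k)) n, mod1 (i * (n - k) + 1) n}"
proof
  fix i assume "i \<in> {1..n-1}"
  then have i: "1 \<le> i" "i + 1 \<le> p + q" using assms(4,5) by auto
  have inv: "[k * q = 1] (mod n)"
    using christoffel_suffix_array_ratio assms by blast
  have k: "k \<le> n" using assms(7) by (auto simp: arith_prog_perm_def)
  have "conj_matrix (christoffel p q) SA i j \<noteq> conj_matrix (christoffel p q) SA (i + 1) j
          \<longleftrightarrow> j = mod1 (i * (n - k)) n \<or> j = mod1 (i * (n - k) + 1) n" if "j \<in> {1..n}" for j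
  proof -
    have "1 \<le> j" "j \<le> p + q" using that assms(4) by auto
    then show ?thesis
      using christoffel_rows_differ_iff[OF assms(1,2,4) inv k i(1), of j] i assms(4)
        conj_matrix_christoffel[OF assms(1-3,6), of i j]
        conj_matrix_christoffel[OF assms(1-3,6), of "i + 1" j]
      by simp
  qed
  moreover have "mod1 z n \<in> {1..n}" for z using assms(5) by (intro mod1_in_range) simp
  ultimately show "{j \<in> {1..n}. conj_matrix (christoffel p q) SA i j \<noteq> conj_matrix (christoffel p q) SA (i + 1) j}
             = {mod1 (i * (n - k)) n, mod1 (i * (n - k) + 1) n}" by blast
qed

end
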